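(* Let $x_{m_1}<\dots<x_2<x_1<w<y_1<y_2<\dots<y_{m_2}$ be real numbers, and let $\mathfrak x_1,\dots,\mathfrak x_{m_1-1}$, $\mathfrak y_1,\dots,\mathfrak y_{m_2-1}$, $\mathfrak w$ be real numbers with $\mathfrak w\neq0$. For $\zeta\in\mathbb C$ with $\operatorname{Im}\zeta\ge0$ define $\mu_i=\operatorname{angle}(\zeta-x_{i+1},\zeta-x_i)$ ($1\le i\le m_1-1$), $\nu_i=\operatorname{angle}(\zeta-y_i,\zeta-y_{i+1})$ ($1\le i\le m_2-1$), and $\alpha=\operatorname{angle}(\zeta-x_1,\zeta-w)$. Then there exists $\varepsilon>0$ such that for all $\zeta$ with $\operatorname{Im}\zeta\ge0$ and $0<|\zeta-w|<\varepsilon$, $$\sum_{i=1}^{m_1-1}\mathfrak x_i\mu_i+\mathfrak w\alpha+\sum_{i=1}^{m_2-1}\mathfrak y_i\nu_i=0$$ holds if and only if $\zeta\in\mathbb R$ and $\zeta>w$. The same statement holds if $\alpha$ is replaced by $\tilde\alpha=\operatorname{angle}(\zeta-w,\zeta-y_1)$ and the condition $\zeta>w$ is replaced by $\zeta<w$.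
   Context: For nonzero complex numbers $u,v$, $\operatorname{angle}(u,v)$ denotes the angle from the vector $u$ to the vector $v$, i.e. $\arg(v/u)$; in all uses above (real points $a<b$ and $\operatorname{Im}\zeta\ge0$), $\operatorname{angle}(\zeta-a,\zeta-b)\in[0,\pi]$ is the angle at $\zeta$ subtended by the segment $[a,b]$. *)

theory Defs
  imports "HOL-Analysis.Analysis"
begin

definition angle :: "complex \<Rightarrow> complex \<Rightarrow> real" where
  "angle u v = Arg (v / u)"

end

theory Submission
  imports Defs
begin

text \<open>
  Seen from a point \<open>\<zeta>\<close> of the closed upper half-plane, a segment \<open>[a, b]\<close> at positive distance
  from \<open>w\<close> subtends an angle \<open>O(Im \<zeta>)\<close> as \<open>\<zeta> \<rightarrow> w\<close>, whereas a segment having \<open>w\<close> as an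
  endpoint subtends an angle of at least \<open>Im \<zeta> / (2 |\<zeta> - w|)\<close>. So for \<open>Im \<zeta> > 0\<close> close to
  \<open>w\<close> the term with the nonzero coefficient \<open>cw\<close> dominates and the sum cannot vanish. On the
  real axis all the other angles are \<open>0\<close>, while the one at \<open>w\<close> is \<open>\<pi>\<close> on the side of the
  segment and \<open>0\<close> on the other side.
\<close>

lemma Arg_le_Im_div_Re:
  assumes "0 < Re z" "0 \<le> Im z"
  shows "Arg z \<le> Im z / Re z"
  using arg_conv_arctan[OF assms(1)] arctan_le_self assms by simp

lemma Im_div_norm_le_Arg:
  assumes "0 \<le> Im z"
  shows "Im z / cmod z \<le> Arg z"
proof (cases "z = 0")
  case False
  have "Im z = Im (of_real (cmod z) * exp (\<i> * Arg z))"
    using Arg_eq[OF False] by simp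
  then have "Im z = cmod z * sin (Arg z)"
    by (simp add: Im_exp)
  moreover have "sin (Arg z) \<le> Arg z"
    using Arg_less_0 assms sin_x_le_x by blast
  ultimately show ?thesis
    using False by simp
qed (simp add: Arg_less_0)

lemma Im_Re_segment_quotient:
  fixes \<zeta> :: complex and a b :: real
  shows "Im ((\<zeta> - of_real b) / (\<zeta> - of_real a)) = (b - a) * Im \<zeta> / (cmod (\<zeta> - of_real a))\<^sup>2"
    and "Re ((\<zeta> - of_real b) / (\<zeta> - of_real a))
           = ((Re \<zeta> - a) * (Re \<zeta> - b) + (Im \<zeta>)\<^sup>2) / (cmod (\<zeta> - of_real a))\<^sup>2"
  using cmod_power2[of "\<zeta> - of_real a"]
  by (simp_all add: Im_divide Re_divide algebra_simps power2_eq_square)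

lemma angle_segment_nonneg:
  assumes "a \<le> b" "0 \<le> Im \<zeta>"
  shows "0 \<le> angle (\<zeta> - of_real a) (\<zeta> - of_real b)"
  unfolding angle_def Arg_less_0 Im_Re_segment_quotient using assms by simp

lemma angle_segment_le:
  assumes "a < b" "0 \<le> Im \<zeta>" "0 < d" "Re \<zeta> \<notin> {a - d<..<b + d}"
  shows "angle (\<zeta> - of_real a) (\<zeta> - of_real b) \<le> (b - a) / d\<^sup>2 * Im \<zeta>"
proof -
  define q where "q = (\<zeta> - of_real b) / (\<zeta> - of_real a)"
  define N where "N = (Re \<zeta> - a) * (Re \<zeta> - b) + (Im \<zeta>)\<^sup>2"
  have "d * d \<le> (Re \<zeta> - a) * (Re \<zeta> - b)"
  proof (cases "b + d \<le> Re \<zeta>")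
    case True
    then show ?thesis using assms by (intro mult_mono) auto
  next
    case False
    then have "d * d \<le> (a - Re \<zeta>) * (b - Re \<zeta>)" using assms by (intro mult_mono) auto
    then show ?thesis by (simp add: algebra_simps)
  qed
  then have N: "d\<^sup>2 \<le> N" "0 < N"
    using assms(3) unfolding N_def power2_eq_square by (smt (verit) zero_le_square mult_pos_pos)+
  have "\<zeta> \<noteq> of_real a" using assms by auto
  then have "0 < (cmod (\<zeta> - of_real a))\<^sup>2" by simp
  then have "Im q / Re q = (b - a) * Im \<zeta> / N" "0 < Re q" "0 \<le> Im q"
    using N assms unfolding q_def N_def Im_Re_segment_quotient by auto
  then have "Arg q \<le> (b - a) * Im \<zeta> / N"
    using Arg_le_Im_div_Re by metis
  also have "\<dots> \<le> (b - a) * Im \<zeta> / d\<^sup>2"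
    using N assms by (intro divide_left_mono) auto
  finally show ?thesis
    unfolding angle_def q_def by simp
qed

lemma angle_segment_ge:
  assumes "a < b" "0 \<le> Im \<zeta>"
  shows "(b - a) * Im \<zeta> / (cmod (\<zeta> - of_real a) * cmod (\<zeta> - of_real b))
           \<le> angle (\<zeta> - of_real a) (\<zeta> - of_real b)"
proof (cases "\<zeta> = of_real a \<or> \<zeta> = of_real b")
  case True
  then show ?thesis by (auto simp: angle_def Arg_less_0)
next
  case False
  define q where "q = (\<zeta> - of_real b) / (\<zeta> - of_real a)"
  have "Im q / cmod q = (b - a) * Im \<zeta> / (cmod (\<zeta> - of_real a) * cmod (\<zeta> - of_real b))"
    using False unfolding q_def Im_Re_segment_quotient
    by (simp add: norm_divide power2_eq_square field_simps)
  moreover have "0 \<le> Im q"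
    using assms unfolding q_def Im_Re_segment_quotient by simp
  ultimately show ?thesis
    using Im_div_norm_le_Arg unfolding angle_def q_def by metis
qed

lemma angle_segment_ge_at_endpoint:
  assumes "a < b" "w = a \<or> w = b" "0 \<le> Im \<zeta>" "cmod (\<zeta> - of_real w) \<le> b - a"
  shows "Im \<zeta> / (2 * cmod (\<zeta> - of_real w)) \<le> angle (\<zeta> - of_real a) (\<zeta> - of_real b)"
proof (cases "Im \<zeta> = 0")
  case True
  then show ?thesis using angle_segment_nonneg assms by simp
next
  case False
  define v where "v = a + b - w"
  have "cmod (\<zeta> - of_real v) \<le> cmod (\<zeta> - of_real w) + cmod (of_real (w - v) :: complex)"
    using norm_triangle_ineq[of "\<zeta> - of_real w" "of_real (w - v)"] by (simp add: algebra_simps)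
  also have "cmod (of_real (w - v) :: complex) = b - a"
    using assms(1,2) unfolding norm_of_real by (auto simp: v_def)
  finally have v_dist: "cmod (\<zeta> - of_real v) \<le> 2 * (b - a)"
    using assms(4) by simp
  have "cmod (\<zeta> - of_real a) * cmod (\<zeta> - of_real b) = cmod (\<zeta> - of_real w) * cmod (\<zeta> - of_real v)"
    using assms(2) by (auto simp: v_def)
  also have "\<dots> \<le> cmod (\<zeta> - of_real w) * (2 * (b - a))"
    using v_dist by (simp add: mult_left_mono)
  finally have "cmod (\<zeta> - of_real a) * cmod (\<zeta> - of_real b) \<le> cmod (\<zeta> - of_real w) * (2 * (b - a))" .
  moreover have "0 < cmod (\<zeta> - of_real a) * cmod (\<zeta> - of_real b)"
    using False by (auto simp: complex_eq_iff)
  ultimately have "(b - a) * Im \<zeta> / (cmod (\<zeta> - of_real w) * (2 * (b - a)))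
      \<le> (b - a) * Im \<zeta> / (cmod (\<zeta> - of_real a) * cmod (\<zeta> - of_real b))"
    using assms by (intro divide_left_mono) auto
  moreover have "(b - a) * Im \<zeta> / (cmod (\<zeta> - of_real w) * (2 * (b - a))) = Im \<zeta> / (2 * cmod (\<zeta> - of_real w))"
    using assms(1) by (cases "\<zeta> = of_real w") (simp_all add: field_simps)
  ultimately show ?thesis
    using angle_segment_ge[OF assms(1,3)] by linarith
qed

lemma angle_segment_of_real:
  assumes "a < b" "t \<noteq> a"
  shows "angle (of_real t - of_real a) (of_real t - of_real b) = (if a < t \<and> t < b then pi else 0)"
proof -
  have "(of_real t - of_real b) / (of_real t - of_real a) = (of_real ((t - b) / (t - a)) :: complex)"
    by simp
  moreover have "(t - b) / (t - a) < 0 \<longleftrightarrow> a < t \<and> t < b"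
    using assms by (auto simp: divide_less_0_iff)
  ultimately show ?thesis
    unfolding angle_def by (simp only: Arg_of_real)
qed

lemma abs_sum_angles_le:
  fixes a b c :: "'i \<Rightarrow> real"
  assumes "\<And>i. i \<in> I \<Longrightarrow> a i < b i" "0 \<le> Im \<zeta>" "0 < d"
    and "\<And>i. i \<in> I \<Longrightarrow> Re \<zeta> \<notin> {a i - d<..<b i + d}"
  shows "\<bar>\<Sum>i\<in>I. c i * angle (\<zeta> - of_real (a i)) (\<zeta> - of_real (b i))\<bar>
           \<le> (\<Sum>i\<in>I. \<bar>c i\<bar> * (b i - a i) / d\<^sup>2) * Im \<zeta>"
proof -
  have "\<bar>\<Sum>i\<in>I. c i * angle (\<zeta> - of_real (a i)) (\<zeta> - of_real (b i))\<bar>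
      \<le> (\<Sum>i\<in>I. \<bar>c i\<bar> * \<bar>angle (\<zeta> - of_real (a i)) (\<zeta> - of_real (b i))\<bar>)"
    unfolding abs_mult[symmetric] by (rule sum_abs)
  also have "\<dots> \<le> (\<Sum>i\<in>I. \<bar>c i\<bar> * ((b i - a i) / d\<^sup>2 * Im \<zeta>))"
    using assms angle_segment_nonneg angle_segment_le
    by (intro sum_mono mult_left_mono) (auto simp: less_imp_le)
  finally show ?thesis
    by (simp add: sum_distrib_right mult.assoc)
qed

lemma sum_angles_bigO_Im:
  fixes a b c :: "'i \<Rightarrow> real"
  assumes "finite I" "\<And>i. i \<in> I \<Longrightarrow> a i < b i" "\<And>i. i \<in> I \<Longrightarrow> b i < w \<or> w < a i"
  obtains d M where "0 < d"
    "\<And>\<zeta>. 0 \<le> Im \<zeta> \<Longrightarrow> cmod (\<zeta> - of_real w) < d \<Longrightarrow>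
       \<bar>\<Sum>i\<in>I. c i * angle (\<zeta> - of_real (a i)) (\<zeta> - of_real (b i))\<bar> \<le> M * Im \<zeta>"
proof
  define gap where "gap i = (if b i < w then w - b i else a i - w)" for i
  define d where "d = Min (insert 1 (gap ` I)) / 2"
  have "0 < gap i" if "i \<in> I" for i
    using assms(3)[OF that] by (auto simp: gap_def)
  then show "0 < d"
    using assms(1) by (simp add: d_def)
  have gap_ge: "2 * d \<le> gap i" if "i \<in> I" for i
    using assms(1) that by (simp add: d_def)
  fix \<zeta> :: complex
  assume \<zeta>: "0 \<le> Im \<zeta>" "cmod (\<zeta> - of_real w) < d"
  then have "\<bar>Re \<zeta> - w\<bar> < d"
    using abs_Re_le_cmod[of "\<zeta> - of_real w"] by simp
  then have "Re \<zeta> \<notin> {a i - d<..<b i + d}" if "i \<in> I" for i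
    using gap_ge[OF that] assms(2)[OF that] by (auto simp: gap_def split: if_splits)
  then show "\<bar>\<Sum>i\<in>I. c i * angle (\<zeta> - of_real (a i)) (\<zeta> - of_real (b i))\<bar>
      \<le> (\<Sum>i\<in>I. \<bar>c i\<bar> * (b i - a i) / d\<^sup>2) * Im \<zeta>"
    using abs_sum_angles_le assms(2) \<zeta>(1) \<open>0 < d\<close> by blast
qed

lemma Im_mult_less_abs_angle_near_endpoint:
  assumes "a < b" "w = a \<or> w = b" "0 < Im \<zeta>"
    and "cmod (\<zeta> - of_real w) \<le> b - a" "cmod (\<zeta> - of_real w) < \<bar>cw\<bar> / (2 * (\<bar>M\<bar> + 1))"
  shows "M * Im \<zeta> < \<bar>cw * angle (\<zeta> - of_real a) (\<zeta> - of_real b)\<bar>"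
proof -
  define r where "r = cmod (\<zeta> - of_real w)"
  have r: "0 < r"
    using assms(3) by (auto simp: r_def complex_eq_iff)
  have "2 * r * (\<bar>M\<bar> + 1) < \<bar>cw\<bar>"
    using assms(5) by (simp add: r_def field_simps)
  moreover have "2 * r * \<bar>M\<bar> \<le> 2 * r * (\<bar>M\<bar> + 1)"
    using r by simp
  ultimately have "2 * r * \<bar>M\<bar> * Im \<zeta> < \<bar>cw\<bar> * Im \<zeta>"
    using assms(3) by (intro mult_strict_right_mono) auto
  then have "\<bar>M\<bar> * Im \<zeta> < \<bar>cw\<bar> * (Im \<zeta> / (2 * r))"
    using r by (simp add: field_simps)
  also have "\<dots> \<le> \<bar>cw\<bar> * \<bar>angle (\<zeta> - of_real a) (\<zeta> - of_real b)\<bar>"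
    using angle_segment_ge_at_endpoint[OF assms(1,2) _ assms(4)] assms(3)
    by (intro mult_left_mono) (auto simp: r_def)
  finally have "\<bar>M\<bar> * Im \<zeta> < \<bar>cw * angle (\<zeta> - of_real a) (\<zeta> - of_real b)\<bar>"
    by (simp add: abs_mult)
  moreover have "M * Im \<zeta> \<le> \<bar>M\<bar> * Im \<zeta>"
    using assms(3) by (intro mult_right_mono) auto
  ultimately show ?thesis
    by linarith
qed

lemma angle_sum_eq_0_iff_near_endpoint:
  fixes S :: "complex \<Rightarrow> real"
  assumes ab: "a < b" and w: "w = a \<or> w = b" and cw: "cw \<noteq> 0" and "0 < d"
    and S: "\<And>\<zeta>. 0 \<le> Im \<zeta> \<Longrightarrow> cmod (\<zeta> - of_real w) < d \<Longrightarrow> \<bar>S \<zeta>\<bar> \<le> M * Im \<zeta>"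
  obtains \<epsilon> where "0 < \<epsilon>" "\<epsilon> \<le> b - a"
    "\<And>\<zeta>. 0 \<le> Im \<zeta> \<Longrightarrow> 0 < cmod (\<zeta> - of_real w) \<Longrightarrow> cmod (\<zeta> - of_real w) < \<epsilon> \<Longrightarrow>
       S \<zeta> + cw * angle (\<zeta> - of_real a) (\<zeta> - of_real b) = 0 \<longleftrightarrow> \<zeta> \<in> \<real> \<and> Re \<zeta> \<notin> {a<..<b}"
proof
  \<comment> \<open>For \<open>|\<zeta> - w| < \<epsilon>\<close> the lower bound \<open>\<bar>cw\<bar> Im \<zeta> / (2 |\<zeta> - w|)\<close> beats \<open>(\<bar>M\<bar> + 1) Im \<zeta>\<close>.\<close>
  define \<epsilon> where "\<epsilon> = min d (min (b - a) (\<bar>cw\<bar> / (2 * (\<bar>M\<bar> + 1))))"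
  show "0 < \<epsilon>" "\<epsilon> \<le> b - a"
    using ab cw \<open>0 < d\<close> by (auto simp: \<epsilon>_def)
  fix \<zeta> :: complex
  assume \<zeta>: "0 \<le> Im \<zeta>" "0 < cmod (\<zeta> - of_real w)" "cmod (\<zeta> - of_real w) < \<epsilon>"
  let ?\<alpha> = "angle (\<zeta> - of_real a) (\<zeta> - of_real b)"
  have S_bound: "\<bar>S \<zeta>\<bar> \<le> M * Im \<zeta>"
    using S \<zeta> by (simp add: \<epsilon>_def)
  show "S \<zeta> + cw * ?\<alpha> = 0 \<longleftrightarrow> \<zeta> \<in> \<real> \<and> Re \<zeta> \<notin> {a<..<b}"
  proof (cases "Im \<zeta> = 0")
    case True
    define t where "t = Re \<zeta>"
    have \<zeta>_eq: "\<zeta> = of_real t"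
      using True by (simp add: t_def complex_eq_iff)
    have "\<bar>t - w\<bar> < b - a" "t \<noteq> w"
      using \<zeta> by (auto simp: \<zeta>_eq \<epsilon>_def simp flip: of_real_diff)
    then have "t \<noteq> a"
      using w by auto
    then have "?\<alpha> = (if a < t \<and> t < b then pi else 0)"
      unfolding \<zeta>_eq by (rule angle_segment_of_real[OF ab])
    moreover have "S \<zeta> = 0"
      using S_bound True by simp
    ultimately show ?thesis
      using True cw by (simp add: complex_is_Real_iff t_def)
  next
    case False
    then have "M * Im \<zeta> < \<bar>cw * ?\<alpha>\<bar>"
      using \<zeta>(1,3) by (intro Im_mult_less_abs_angle_near_endpoint[OF ab w]) (auto simp: \<epsilon>_def)
    then have "\<bar>S \<zeta>\<bar> < \<bar>cw * ?\<alpha>\<bar>"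
      using S_bound by linarith
    then show ?thesis
      using False by (auto simp: complex_is_Real_iff)
  qed
qed

lemma angle_sum_eq_0_iff_right_of_endpoint:
  fixes S :: "complex \<Rightarrow> real"
  assumes "a < b" "cw \<noteq> 0" "0 < d"
    and "\<And>\<zeta>. 0 \<le> Im \<zeta> \<Longrightarrow> cmod (\<zeta> - of_real b) < d \<Longrightarrow> \<bar>S \<zeta>\<bar> \<le> M * Im \<zeta>"
  shows "\<exists>\<epsilon>>0. \<forall>\<zeta>. 0 \<le> Im \<zeta> \<and> 0 < cmod (\<zeta> - of_real b) \<and> cmod (\<zeta> - of_real b) < \<epsilon> \<longrightarrow>
           (S \<zeta> + cw * angle (\<zeta> - of_real a) (\<zeta> - of_real b) = 0 \<longleftrightarrow> \<zeta> \<in> \<real> \<and> b < Re \<zeta>)"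
proof -
  obtain \<epsilon> where \<epsilon>: "0 < \<epsilon>" "\<epsilon> \<le> b - a" and eq_0_iff:
    "\<And>\<zeta>. 0 \<le> Im \<zeta> \<Longrightarrow> 0 < cmod (\<zeta> - of_real b) \<Longrightarrow> cmod (\<zeta> - of_real b) < \<epsilon> \<Longrightarrow>
       S \<zeta> + cw * angle (\<zeta> - of_real a) (\<zeta> - of_real b) = 0 \<longleftrightarrow> \<zeta> \<in> \<real> \<and> Re \<zeta> \<notin> {a<..<b}"
    using angle_sum_eq_0_iff_near_endpoint[of a b b cw d S M] assms by blast
  have "Re \<zeta> \<notin> {a<..<b} \<longleftrightarrow> b < Re \<zeta>"
    if "\<zeta> \<in> \<real>" "0 < cmod (\<zeta> - of_real b)" "cmod (\<zeta> - of_real b) < \<epsilon>" for \<zeta>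
    using that \<epsilon>(2) by (auto simp: complex_is_Real_iff cmod_def)
  then show ?thesis
    using \<epsilon>(1) eq_0_iff by blast
qed

lemma angle_sum_eq_0_iff_left_of_endpoint:
  fixes S :: "complex \<Rightarrow> real"
  assumes "a < b" "cw \<noteq> 0" "0 < d"
    and "\<And>\<zeta>. 0 \<le> Im \<zeta> \<Longrightarrow> cmod (\<zeta> - of_real a) < d \<Longrightarrow> \<bar>S \<zeta>\<bar> \<le> M * Im \<zeta>"
  shows "\<exists>\<epsilon>>0. \<forall>\<zeta>. 0 \<le> Im \<zeta> \<and> 0 < cmod (\<zeta> - of_real a) \<and> cmod (\<zeta> - of_real a) < \<epsilon> \<longrightarrow>
           (S \<zeta> + cw * angle (\<zeta> - of_real a) (\<zeta> - of_real b) = 0 \<longleftrightarrow> \<zeta> \<in> \<real> \<and> Re \<zeta> < a)"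
proof -
  obtain \<epsilon> where \<epsilon>: "0 < \<epsilon>" "\<epsilon> \<le> b - a" and eq_0_iff:
    "\<And>\<zeta>. 0 \<le> Im \<zeta> \<Longrightarrow> 0 < cmod (\<zeta> - of_real a) \<Longrightarrow> cmod (\<zeta> - of_real a) < \<epsilon> \<Longrightarrow>
       S \<zeta> + cw * angle (\<zeta> - of_real a) (\<zeta> - of_real b) = 0 \<longleftrightarrow> \<zeta> \<in> \<real> \<and> Re \<zeta> \<notin> {a<..<b}"
    using angle_sum_eq_0_iff_near_endpoint[of a b a cw d S M] assms by blast
  have "Re \<zeta> \<notin> {a<..<b} \<longleftrightarrow> Re \<zeta> < a"
    if "\<zeta> \<in> \<real>" "0 < cmod (\<zeta> - of_real a)" "cmod (\<zeta> - of_real a) < \<epsilon>" for \<zeta>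
    using that \<epsilon>(2) by (auto simp: complex_is_Real_iff cmod_def)
  then show ?thesis
    using \<epsilon>(1) eq_0_iff by blast
qed

lemma decreasing_le_first:
  fixes x :: "nat \<Rightarrow> real"
  assumes "\<And>i. 1 \<le> i \<Longrightarrow> i < m \<Longrightarrow> x (i + 1) < x i" "1 \<le> i" "i \<le> m"
  shows "x i \<le> x 1"
  using assms(2,3)
proof (induction i rule: dec_induct)
  case (step n)
  then show ?case
    using assms(1)[of n] by simp
qed simp

theorem lemma2p3:
  fixes x y :: "nat \<Rightarrow> real" and w :: real
    and cx cy :: "nat \<Rightarrow> real" and cw :: real
    and m1 m2 :: nat
  assumes m1: "m1 \<ge> 1" and m2: "m2 \<ge> 1"
    and x_dec: "\<And>i. 1 \<le> i \<Longrightarrow> i < m1 \<Longrightarrow> x (i + 1) < x i"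
    and x1w: "x 1 < w" and wy1: "w < y 1"
    and y_inc: "\<And>i. 1 \<le> i \<Longrightarrow> i < m2 \<Longrightarrow> y i < y (i + 1)"
    and cw: "cw \<noteq> 0"
  shows
   "(\<exists>\<epsilon>>0. \<forall>\<zeta>::complex. Im \<zeta> \<ge> 0 \<and> 0 < cmod (\<zeta> - of_real w) \<and> cmod (\<zeta> - of_real w) < \<epsilon> \<longrightarrow>
       ((\<Sum>i=1..m1-1. cx i * angle (\<zeta> - of_real (x (i+1))) (\<zeta> - of_real (x i)))
         + cw * angle (\<zeta> - of_real (x 1)) (\<zeta> - of_real w)
         + (\<Sum>i=1..m2-1. cy i * angle (\<zeta> - of_real (y i)) (\<zeta> - of_real (y (i+1)))) = 0
        \<longleftrightarrow> \<zeta> \<in> \<real> \<and> Re \<zeta> > w))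
  \<and> (\<exists>\<epsilon>>0. \<forall>\<zeta>::complex. Im \<zeta> \<ge> 0 \<and> 0 < cmod (\<zeta> - of_real w) \<and> cmod (\<zeta> - of_real w) < \<epsilon> \<longrightarrow>
       ((\<Sum>i=1..m1-1. cx i * angle (\<zeta> - of_real (x (i+1))) (\<zeta> - of_real (x i)))
         + cw * angle (\<zeta> - of_real w) (\<zeta> - of_real (y 1))
         + (\<Sum>i=1..m2-1. cy i * angle (\<zeta> - of_real (y i)) (\<zeta> - of_real (y (i+1)))) = 0
        \<longleftrightarrow> \<zeta> \<in> \<real> \<and> Re \<zeta> < w))"
proof -
  define S1 where "S1 \<zeta> = (\<Sum>i=1..m1-1. cx i * angle (\<zeta> - of_real (x (i+1))) (\<zeta> - of_real (x i)))" for \<zeta>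
  define S2 where "S2 \<zeta> = (\<Sum>i=1..m2-1. cy i * angle (\<zeta> - of_real (y i)) (\<zeta> - of_real (y (i+1))))" for \<zeta>
  have x_segments: "x (i + 1) < x i" "x i < w" if "i \<in> {1..m1-1}" for i
    using that x_dec decreasing_le_first[of m1 x i] x1w by force+
  have y_segments: "y i < y (i + 1)" "w < y i" if "i \<in> {1..m2-1}" for i
    using that y_inc decreasing_le_first[of m2 "\<lambda>i. - y i" i] wy1 by force+
  obtain d1 M1 where "0 < d1" and S1_bound:
    "\<And>\<zeta>. 0 \<le> Im \<zeta> \<Longrightarrow> cmod (\<zeta> - of_real w) < d1 \<Longrightarrow> \<bar>S1 \<zeta>\<bar> \<le> M1 * Im \<zeta>"
    using sum_angles_bigO_Im[of "{1..m1-1}" "\<lambda>i. x (i + 1)" x w cx] x_segments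
    unfolding S1_def by blast
  obtain d2 M2 where "0 < d2" and S2_bound:
    "\<And>\<zeta>. 0 \<le> Im \<zeta> \<Longrightarrow> cmod (\<zeta> - of_real w) < d2 \<Longrightarrow> \<bar>S2 \<zeta>\<bar> \<le> M2 * Im \<zeta>"
    using sum_angles_bigO_Im[of "{1..m2-1}" y "\<lambda>i. y (i + 1)" w cy] y_segments
    unfolding S2_def by blast
  have d: "0 < min d1 d2"
    using \<open>0 < d1\<close> \<open>0 < d2\<close> by simp
  have S_bound: "\<bar>S1 \<zeta> + S2 \<zeta>\<bar> \<le> (M1 + M2) * Im \<zeta>"
    if "0 \<le> Im \<zeta>" "cmod (\<zeta> - of_real w) < min d1 d2" for \<zeta>
    using S1_bound[of \<zeta>] S2_bound[of \<zeta>] that abs_triangle_ineq[of "S1 \<zeta>" "S2 \<zeta>"]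
    by (simp add: distrib_right)
  show ?thesis
    using angle_sum_eq_0_iff_right_of_endpoint[OF x1w cw d S_bound]
      angle_sum_eq_0_iff_left_of_endpoint[OF wy1 cw d S_bound]
    unfolding S1_def[symmetric] S2_def[symmetric] by (simp add: ac_simps)
qed

end
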